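(* Let $1\le b<\frac{n}{2}-1$. If $T$ is a tree attaining the maximum value of $M_1$ over $\mathcal{CT}^*_{n,b}$, or a tree attaining the maximum value of $M_2$ over $\mathcal{CT}^*_{n,b}$, then $T$ does not simultaneously contain a vertex of degree $2$ and a vertex of degree $3$.
   Context: A chemical tree is a tree with maximum degree at most $4$. A branching vertex is a vertex of degree greater than $2$. $\mathcal{CT}^*_{n,b}$ is the class of all $n$-vertex chemical trees with exactly $b$ branching vertices. $M_1(G)=\sum_v d_v^2$ and $M_2(G)=\sum_{uv\in E(G)}d_ud_v$, where $d_v$ is the degree of $v$. *)

theory Defs
  imports Complex_Main
begin

definition deg :: "nat set set \<Rightarrow> nat \<Rightarrow> nat" where
  "deg E v = card {u. {u, v} \<in> E}"

definition adj_rel :: "nat set set \<Rightarrow> (nat \<times> nat) set" where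
  "adj_rel E = {(u, v). {u, v} \<in> E}"

definition is_tree :: "nat \<Rightarrow> nat set set \<Rightarrow> bool" where
  "is_tree n E \<longleftrightarrow>
     n \<ge> 1 \<and>
     E \<subseteq> {e. \<exists>u v. e = {u, v} \<and> u \<noteq> v \<and> u < n \<and> v < n} \<and>
     card E = n - 1 \<and>
     (\<forall>u<n. \<forall>v<n. (u, v) \<in> (adj_rel E)\<^sup>*)"

definition chemical_tree :: "nat \<Rightarrow> nat set set \<Rightarrow> bool" where
  "chemical_tree n E \<longleftrightarrow> is_tree n E \<and> (\<forall>v<n. deg E v \<le> 4)"

definition num_branching :: "nat \<Rightarrow> nat set set \<Rightarrow> nat" where
  "num_branching n E = card {v. v < n \<and> deg E v > 2}"

definition CT_star :: "nat \<Rightarrow> nat \<Rightarrow> nat set set set" where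
  "CT_star n b = {E. chemical_tree n E \<and> num_branching n E = b}"

definition M1 :: "nat \<Rightarrow> nat set set \<Rightarrow> nat" where
  "M1 n E = (\<Sum>v<n. (deg E v)^2)"

definition M2 :: "nat \<Rightarrow> nat set set \<Rightarrow> nat" where
  "M2 n E = (\<Sum>(u, v) \<in> {(u, v). u < v \<and> v < n \<and> {u, v} \<in> E}. deg E u * deg E v)"

end

theory Submission
  imports Defs
begin

text \<open>Let u have degree 2, with neighbours a and c, and let v have degree 3. Deleting one of the
  two edges at u, say uc, leaves u and v connected, so replacing uc by vc gives again a chemical
  tree. In it u has degree 1, v has degree 4 and all other degrees are unchanged; in particular the
  branching vertices are the same. This raises M1 by 4. It also raises M2: the edge ua loses at
  most 4 (or exactly 2 if a = v), the edge uc of weight 2 d(c) becomes vc of weight 4 d(c), and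
  each of the other edges at v gains at least 1. Hence a maximiser of either index cannot have
  vertices of degree 2 and 3 at the same time.\<close>

lemma sym_adj_rel: "sym (adj_rel E)"
  unfolding adj_rel_def sym_def by (auto simp: insert_commute)

lemma adj_rel_rtrancl_sym: "(x, y) \<in> (adj_rel E)\<^sup>* \<Longrightarrow> (y, x) \<in> (adj_rel E)\<^sup>*"
  by (rule symD[OF sym_rtrancl[OF sym_adj_rel]])

lemma adj_rel_rtrancl_mono: "E \<subseteq> F \<Longrightarrow> (adj_rel E)\<^sup>* \<subseteq> (adj_rel F)\<^sup>*"
  unfolding adj_rel_def by (intro rtrancl_mono) auto

lemma adj_rel_rtrancl_Image_eq:
  "(x, y) \<in> (adj_rel E)\<^sup>* \<Longrightarrow> (adj_rel E)\<^sup>* `` {x} = (adj_rel E)\<^sup>* `` {y}"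
  using adj_rel_rtrancl_sym rtrancl_trans by (metis Image_singleton_iff subsetI subset_antisym)

lemma adj_rel_rtrancl_insertD:
  assumes "(x, y) \<in> (adj_rel (insert {p, q} E))\<^sup>*"
  shows "(x, y) \<in> (adj_rel E)\<^sup>* \<or> x \<in> (adj_rel E)\<^sup>* `` {p, q} \<and> y \<in> (adj_rel E)\<^sup>* `` {p, q}"
  using assms
proof (induction rule: rtrancl_induct)
  case (step w z)
  have "(w, z) \<in> adj_rel E \<or> w \<in> {p, q} \<and> z \<in> {p, q}"
    using step.hyps(2) by (auto simp: adj_rel_def doubleton_eq_iff)
  then show ?case
  proof
    assume "(w, z) \<in> adj_rel E"
    with step.IH show ?case by (meson Image_iff rtrancl.rtrancl_into_rtrancl)
  next
    assume "w \<in> {p, q} \<and> z \<in> {p, q}"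
    with step.IH show ?case by (blast dest: adj_rel_rtrancl_sym)
  qed
qed simp

lemma card_le_card_edges_plus_components:
  assumes "finite E" "finite V" "\<forall>e\<in>E. \<exists>x\<in>V. \<exists>y\<in>V. e = {x, y}"
  shows "card V \<le> card E + card ((\<lambda>x. (adj_rel E)\<^sup>* `` {x}) ` V)"
  using assms(1,3)
proof (induction E rule: finite_induct)
  case empty
  have "(\<lambda>x. (adj_rel {})\<^sup>* `` {x}) ` V = (\<lambda>x. {x}) ` V"
    by (simp add: adj_rel_def)
  then show ?case by (simp add: card_image)
next
  case (insert e E)
  from insert.prems obtain p q where e: "e = {p, q}" "p \<in> V" "q \<in> V" by blast
  define C where "C x = (adj_rel E)\<^sup>* `` {x}" for x
  define C' where "C' x = (adj_rel (insert e E))\<^sup>* `` {x}" for x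
  define h where "h S = (adj_rel (insert e E))\<^sup>* `` S" for S
  have "(adj_rel E)\<^sup>* \<subseteq> (adj_rel (insert e E))\<^sup>*" by (rule adj_rel_rtrancl_mono) auto
  then have h_C: "h (C x) = C' x" for x
    unfolding h_def C_def C'_def by (auto intro: rtrancl_trans)
  \<comment> \<open>The new edge can only merge the components of p and q.\<close>
  have "inj_on h (C ` V - {C q})"
  proof (rule inj_onI)
    fix S T assume ST: "S \<in> C ` V - {C q}" "T \<in> C ` V - {C q}" "h S = h T"
    then obtain x y where "S = C x" "T = C y" by blast
    with ST h_C have xy: "S = C x" "T = C y" "C x \<noteq> C q" "C y \<noteq> C q" "C' x = C' y"
      by simp_all
    have not_q: "(q, x) \<notin> (adj_rel E)\<^sup>*" "(q, y) \<notin> (adj_rel E)\<^sup>*"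
      using xy(3,4) adj_rel_rtrancl_Image_eq unfolding C_def by metis+
    have "(x, y) \<in> (adj_rel (insert {p, q} E))\<^sup>*"
      using xy(5) unfolding C'_def e(1) by auto
    from adj_rel_rtrancl_insertD[OF this] show "S = T"
    proof
      assume "(x, y) \<in> (adj_rel E)\<^sup>*"
      then show ?thesis unfolding xy(1,2) C_def by (rule adj_rel_rtrancl_Image_eq)
    next
      assume "x \<in> (adj_rel E)\<^sup>* `` {p, q} \<and> y \<in> (adj_rel E)\<^sup>* `` {p, q}"
      with not_q have "(p, x) \<in> (adj_rel E)\<^sup>*" "(p, y) \<in> (adj_rel E)\<^sup>*" by auto
      then show ?thesis unfolding xy(1,2) C_def by (metis adj_rel_rtrancl_Image_eq)
    qed
  qed
  then have "card (C ` V - {C q}) \<le> card (C' ` V)"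
    using h_C assms(2) by (intro card_inj_on_le[of h]) auto
  moreover have "card (C ` V) \<le> Suc (card (C ` V - {C q}))"
    using assms(2) by (cases "C q \<in> C ` V") (simp_all add: card_Suc_Diff1)
  ultimately show ?case
    using insert.IH insert.prems insert.hyps unfolding C_def C'_def by simp
qed

lemma adj_rel_rtrancl_subset_if_reachable:
  assumes "E - {{p, q}} \<subseteq> F" "(p, q) \<in> (adj_rel F)\<^sup>*"
  shows "(adj_rel E)\<^sup>* \<subseteq> (adj_rel F)\<^sup>*"
proof (rule rtrancl_subset_rtrancl, rule subrelI)
  fix x y assume xy: "(x, y) \<in> adj_rel E"
  show "(x, y) \<in> (adj_rel F)\<^sup>*"
  proof (cases "{x, y} = {p, q}")
    case True
    then have "(x, y) = (p, q) \<or> (x, y) = (q, p)" by (auto simp: doubleton_eq_iff)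
    then show ?thesis using assms(2) adj_rel_rtrancl_sym by blast
  next
    case False
    then show ?thesis using xy assms(1) by (auto simp: adj_rel_def)
  qed
qed

lemma connected_card_le_Suc_card_edges:
  assumes "finite E" "finite V" "\<forall>e\<in>E. \<exists>x\<in>V. \<exists>y\<in>V. e = {x, y}"
    and "r \<in> V" "\<forall>x\<in>V. (r, x) \<in> (adj_rel E)\<^sup>*"
  shows "card V \<le> Suc (card E)"
proof -
  have "(\<lambda>x. (adj_rel E)\<^sup>* `` {x}) ` V = {(adj_rel E)\<^sup>* `` {r}}"
    using assms(4,5) adj_rel_rtrancl_Image_eq by fastforce
  then show ?thesis using card_le_card_edges_plus_components[OF assms(1-3)] by simp
qed

lemma is_tree_edgeD: "is_tree n E \<Longrightarrow> {x, y} \<in> E \<Longrightarrow> x < n \<and> y < n \<and> x \<noteq> y"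
  unfolding is_tree_def by (auto simp: doubleton_eq_iff)

lemma is_tree_edges: "is_tree n E \<Longrightarrow> E \<subseteq> {e. \<exists>x y. e = {x, y} \<and> x \<noteq> y \<and> x < n \<and> y < n}"
  unfolding is_tree_def by blast

lemma is_tree_finite: "is_tree n E \<Longrightarrow> finite E"
  by (rule finite_subset[of _ "Pow {..<n}"]) (auto dest: is_tree_edges)

lemma is_tree_edge_incident:
  assumes "is_tree n E" "e \<in> E" "u \<in> e"
  shows "\<exists>w. {w, u} \<in> E \<and> e = {u, w}"
proof -
  obtain x y where "e = {x, y}" using assms(1,2) is_tree_edges by blast
  with assms(2,3) show ?thesis by (metis insert_commute insertE singletonD)
qed

lemma is_tree_remove_edge_disconnects:
  assumes tree: "is_tree n E" and "{u, c} \<in> E"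
  shows "(u, c) \<notin> (adj_rel (E - {{u, c}}))\<^sup>*"
proof
  define E0 where "E0 = E - {{u, c}}"
  assume "(u, c) \<in> (adj_rel E0)\<^sup>*"
  then have "(adj_rel E)\<^sup>* \<subseteq> (adj_rel E0)\<^sup>*"
    by (intro adj_rel_rtrancl_subset_if_reachable) (auto simp: E0_def)
  then have "\<forall>x<n. (0, x) \<in> (adj_rel E0)\<^sup>*"
    using tree unfolding is_tree_def by blast
  moreover have "\<forall>e\<in>E0. \<exists>x\<in>{..<n}. \<exists>y\<in>{..<n}. e = {x, y}"
    using is_tree_edges[OF tree] unfolding E0_def by blast
  ultimately have "n \<le> Suc (card E0)"
    using connected_card_le_Suc_card_edges[of E0 "{..<n}" 0] is_tree_finite[OF tree] tree
    unfolding E0_def is_tree_def by auto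
  moreover have "Suc (card E0) = card E"
    unfolding E0_def by (rule card_Suc_Diff1[OF is_tree_finite[OF tree] assms(2)])
  ultimately show False using tree unfolding is_tree_def by simp
qed

lemma reachable_avoiding_one_of_two_edges:
  assumes "(u, x) \<in> (adj_rel E)\<^sup>*" "{u, a} \<in> E" "{u, c} \<in> E" "a \<noteq> c"
  shows "(u, x) \<in> (adj_rel (E - {{u, c}}))\<^sup>* \<or> (u, x) \<in> (adj_rel (E - {{u, a}}))\<^sup>*"
  using assms(1)
proof (induction rule: rtrancl_induct)
  case (step w z)
  have ua: "(u, a) \<in> adj_rel (E - {{u, c}})" and uc: "(u, c) \<in> adj_rel (E - {{u, a}})"
    using assms(2-4) by (auto simp: adj_rel_def doubleton_eq_iff)
  consider "(w, z) \<in> adj_rel (E - {{u, c}}) \<inter> adj_rel (E - {{u, a}})" | "z \<in> {u, a, c}"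
    using step.hyps(2) by (auto simp: adj_rel_def doubleton_eq_iff)
  then show ?case
  proof cases
    case 1
    with step.IH show ?thesis by (meson IntD1 IntD2 rtrancl_into_rtrancl)
  next
    case 2
    with ua uc show ?thesis by blast
  qed
qed simp

lemma is_tree_deg_2_removable_edge:
  assumes tree: "is_tree n E" and "u < n" "v < n" "deg E u = 2"
  obtains a c where "{y. {y, u} \<in> E} = {a, c}" "a \<noteq> c" "{u, c} \<in> E"
    "(u, v) \<in> (adj_rel (E - {{u, c}}))\<^sup>*"
proof -
  obtain a c where ac: "{y. {y, u} \<in> E} = {a, c}" "a \<noteq> c"
    using assms(4) unfolding deg_def by (auto simp: card_2_iff)
  then have "{a, u} \<in> E" "{c, u} \<in> E" by blast+
  then have ua: "{u, a} \<in> E" and uc: "{u, c} \<in> E" by (simp_all add: insert_commute)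
  have "(u, v) \<in> (adj_rel E)\<^sup>*" using tree assms(2,3) unfolding is_tree_def by blast
  from reachable_avoiding_one_of_two_edges[OF this ua uc ac(2)] show thesis
  proof
    assume "(u, v) \<in> (adj_rel (E - {{u, c}}))\<^sup>*"
    then show thesis using that ac uc by blast
  next
    assume "(u, v) \<in> (adj_rel (E - {{u, a}}))\<^sup>*"
    then show thesis using that[of c a] ac ua by (simp add: insert_commute)
  qed
qed

lemma finite_neighbours: "finite E \<Longrightarrow> finite {y. {y, x} \<in> E}"
  by (rule finite_imageD[of "\<lambda>y. {y, x}"])
    (auto intro: finite_subset simp: inj_on_def doubleton_eq_iff)

lemma deg_pos: "finite E \<Longrightarrow> {y, x} \<in> E \<Longrightarrow> 0 < deg E x"
  unfolding deg_def by (auto simp: card_gt_0_iff finite_neighbours)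

lemma deg_rotate_edge:
  assumes fin: "finite E" and "{u, c} \<in> E" "{v, c} \<notin> E" "distinct [u, v, c]"
  shows "deg (insert {v, c} (E - {{u, c}})) = (deg E)(u := deg E u - 1, v := Suc (deg E v))"
proof
  fix x
  define N where "N x = {y. {y, x} \<in> E}" for x
  have fin_N: "finite (N x)" for x unfolding N_def using fin by (rule finite_neighbours)
  have N_u: "c \<in> N u" and N_c: "u \<in> N c" "v \<notin> N c" and N_v: "c \<notin> N v"
    using assms(2,3) by (auto simp: N_def insert_commute)
  have "card (N c) > 0" using fin_N N_c(1) by (auto simp: card_gt_0_iff)
  have "{y. {y, x} \<in> insert {v, c} (E - {{u, c}})} =
      (if x = u then N u - {c} else if x = v then insert c (N v)
       else if x = c then insert v (N c - {u}) else N x)"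
    using assms(4) by (auto simp: N_def doubleton_eq_iff)
  then show "deg (insert {v, c} (E - {{u, c}})) x = ((deg E)(u := deg E u - 1, v := Suc (deg E v))) x"
    using assms(4) N_u N_c N_v fin_N \<open>card (N c) > 0\<close> unfolding deg_def N_def[symmetric]
    by simp
qed

lemma is_tree_rotate_edge_fresh:
  assumes tree: "is_tree n E" and "{u, c} \<in> E" "u \<noteq> v"
    and reach: "(u, v) \<in> (adj_rel (E - {{u, c}}))\<^sup>*"
  shows "v \<noteq> c" "{v, c} \<notin> E"
proof -
  have not_uc: "(u, c) \<notin> (adj_rel (E - {{u, c}}))\<^sup>*"
    using is_tree_remove_edge_disconnects[OF tree assms(2)] .
  with reach show "v \<noteq> c" by blast
  show "{v, c} \<notin> E"
  proof
    assume "{v, c} \<in> E"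
    with \<open>u \<noteq> v\<close> have "(v, c) \<in> adj_rel (E - {{u, c}})"
      by (auto simp: adj_rel_def doubleton_eq_iff)
    with reach not_uc show False by (meson rtrancl_into_rtrancl)
  qed
qed

lemma is_tree_rotate_edge:
  assumes tree: "is_tree n E" and uc: "{u, c} \<in> E" and "u \<noteq> v" "v < n"
    and reach: "(u, v) \<in> (adj_rel (E - {{u, c}}))\<^sup>*"
  shows "is_tree n (insert {v, c} (E - {{u, c}}))"
proof -
  define E' where "E' = insert {v, c} (E - {{u, c}})"
  note fresh = is_tree_rotate_edge_fresh[OF tree uc \<open>u \<noteq> v\<close> reach]
  have "card E' = card E"
    using fresh(2) card_Suc_Diff1[OF is_tree_finite[OF tree] uc] is_tree_finite[OF tree]
    unfolding E'_def by simp
  moreover have "E' \<subseteq> {e. \<exists>x y. e = {x, y} \<and> x \<noteq> y \<and> x < n \<and> y < n}"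
    using tree fresh(1) \<open>v < n\<close> is_tree_edgeD[OF tree uc] unfolding E'_def is_tree_def by blast
  moreover have "(u, c) \<in> (adj_rel E')\<^sup>*"
  proof -
    have "(u, v) \<in> (adj_rel E')\<^sup>*"
      using reach adj_rel_rtrancl_mono[of "E - {{u, c}}" E'] unfolding E'_def by blast
    moreover have "(v, c) \<in> adj_rel E'" unfolding E'_def adj_rel_def by simp
    ultimately show ?thesis by (rule rtrancl_into_rtrancl)
  qed
  then have "(adj_rel E)\<^sup>* \<subseteq> (adj_rel E')\<^sup>*"
    by (intro adj_rel_rtrancl_subset_if_reachable) (auto simp: E'_def)
  ultimately show ?thesis using tree unfolding E'_def[symmetric] is_tree_def by auto
qed

lemma deg_rotate_edge_in_tree:
  assumes tree: "is_tree n E" and uc: "{u, c} \<in> E" and "u \<noteq> v"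
    and reach: "(u, v) \<in> (adj_rel (E - {{u, c}}))\<^sup>*"
  shows "deg (insert {v, c} (E - {{u, c}})) = (deg E)(u := deg E u - 1, v := Suc (deg E v))"
proof (rule deg_rotate_edge[OF is_tree_finite[OF tree] uc])
  show "{v, c} \<notin> E" "distinct [u, v, c]"
    using is_tree_rotate_edge_fresh[OF tree uc \<open>u \<noteq> v\<close> reach] is_tree_edgeD[OF tree uc]
      \<open>u \<noteq> v\<close> by auto
qed

lemma rotate_edge_in_CT_star:
  assumes chem: "chemical_tree n E" and "{u, c} \<in> E" "u \<noteq> v" "v < n"
    and "deg E u = 2" "deg E v = 3" and reach: "(u, v) \<in> (adj_rel (E - {{u, c}}))\<^sup>*"
  shows "insert {v, c} (E - {{u, c}}) \<in> CT_star n (num_branching n E)"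
proof -
  have tree: "is_tree n E" using chem unfolding chemical_tree_def by simp
  have deg': "deg (insert {v, c} (E - {{u, c}})) = (deg E)(u := 1, v := 4)"
    using deg_rotate_edge_in_tree[OF tree assms(2,3) reach] assms(5,6) by simp
  have "chemical_tree n (insert {v, c} (E - {{u, c}}))"
    using is_tree_rotate_edge[OF tree assms(2-4) reach] chem
    unfolding chemical_tree_def deg' by simp
  moreover have "num_branching n (insert {v, c} (E - {{u, c}})) = num_branching n E"
    unfolding num_branching_def deg' using assms(5,6) by (intro arg_cong[where f = card]) auto
  ultimately show ?thesis unfolding CT_star_def by simp
qed

lemma M1_update_two_degrees:
  assumes "u < n" "v < n" "u \<noteq> v" "deg F = (deg E)(u := du, v := dv)"
  shows "M1 n F + (deg E u)\<^sup>2 + (deg E v)\<^sup>2 = M1 n E + du\<^sup>2 + dv\<^sup>2"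
proof -
  have split: "(\<Sum>x<n. f x) = f u + f v + (\<Sum>x\<in>{..<n} - {u, v}. f x)" for f :: "nat \<Rightarrow> nat"
    using assms(1-3) by (simp add: sum.remove[of _ u] sum.remove[of _ v] Diff_insert2 [symmetric])
  have "(\<Sum>x\<in>{..<n} - {u, v}. (deg F x)\<^sup>2) = (\<Sum>x\<in>{..<n} - {u, v}. (deg E x)\<^sup>2)"
    using assms(4) by (intro sum.cong) auto
  then show ?thesis
    unfolding M1_def using split[of "\<lambda>x. (deg F x)\<^sup>2"] split[of "\<lambda>x. (deg E x)\<^sup>2"] assms(3,4) by simp
qed

lemma M1_rotate_edge_less:
  assumes "is_tree n E" "{u, c} \<in> E" "u \<noteq> v" "u < n" "v < n"
    and "deg E u = 2" "deg E v = 3" and "(u, v) \<in> (adj_rel (E - {{u, c}}))\<^sup>*"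
  shows "M1 n E < M1 n (insert {v, c} (E - {{u, c}}))"
proof -
  have "deg (insert {v, c} (E - {{u, c}})) = (deg E)(u := 1, v := 4)"
    using deg_rotate_edge_in_tree[OF assms(1-3,8)] assms(6,7) by simp
  from M1_update_two_degrees[OF assms(4,5,3) this] show ?thesis
    using assms(6,7) by simp
qed

lemma M2_eq_sum_edges:
  assumes "E \<subseteq> {e. \<exists>x y. e = {x, y} \<and> x \<noteq> y \<and> x < n \<and> y < n}"
  shows "M2 n E = (\<Sum>e\<in>E. prod (deg E) e)"
proof -
  define P where "P = {(x, y). x < y \<and> y < n \<and> {x, y} \<in> E}"
  have "E = (\<lambda>(x, y). {x, y}) ` P"
  proof
    show "E \<subseteq> (\<lambda>(x, y). {x, y}) ` P"
    proof
      fix e assume "e \<in> E"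
      with assms obtain x y where "e = {x, y}" "x \<noteq> y" "x < n" "y < n" by blast
      then obtain x y where "e = {x, y}" "x < y" "y < n"
        by (metis insert_commute linorder_neqE_nat)
      with \<open>e \<in> E\<close> show "e \<in> (\<lambda>(x, y). {x, y}) ` P" unfolding P_def by blast
    qed
  qed (auto simp: P_def)
  moreover have "inj_on (\<lambda>(x, y). {x, y}) P"
    by (auto simp: inj_on_def P_def doubleton_eq_iff)
  ultimately have "(\<Sum>e\<in>E. prod (deg E) e) = (\<Sum>(x, y)\<in>P. prod (deg E) {x, y})"
    by (simp add: sum.reindex case_prod_unfold)
  also have "\<dots> = M2 n E"
    unfolding M2_def P_def[symmetric] by (intro sum.cong) (auto simp: P_def)
  finally show ?thesis ..
qed

lemma sum_plus_card_le_sum: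
  fixes f g :: "'a \<Rightarrow> nat"
  assumes "finite A" "B \<subseteq> A" "\<And>x. x \<in> A \<Longrightarrow> f x \<le> g x" "\<And>x. x \<in> B \<Longrightarrow> f x < g x"
  shows "sum f A + card B \<le> sum g A"
proof -
  have "card B = (\<Sum>x\<in>A. of_bool (x \<in> B))"
    using assms(1,2) by (simp add: Int_absorb1 Int_commute)
  then have "sum f A + card B = (\<Sum>x\<in>A. f x + of_bool (x \<in> B))"
    by (simp add: sum.distrib)
  also have "\<dots> \<le> sum g A"
    using assms(3,4) by (intro sum_mono) (auto simp: Suc_le_eq)
  finally show ?thesis .
qed

lemma sum_prod_le_sum_prod_raise:
  fixes f g :: "'a \<Rightarrow> nat"
  assumes "finite R" "\<And>e x. e \<in> R \<Longrightarrow> x \<in> e \<Longrightarrow> f x \<le> g x" "f v < g v"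
    and N: "\<And>w. w \<in> N \<Longrightarrow> {v, w} \<in> R \<and> w \<noteq> v \<and> 0 < f w"
  shows "(\<Sum>e\<in>R. prod f e) + card N \<le> (\<Sum>e\<in>R. prod g e)"
proof -
  have "card N = card ((\<lambda>w. {v, w}) ` N)"
    by (rule card_image[symmetric]) (auto simp: inj_on_def doubleton_eq_iff)
  also have "(\<Sum>e\<in>R. prod f e) + \<dots> \<le> (\<Sum>e\<in>R. prod g e)"
  proof (rule sum_plus_card_le_sum[OF assms(1)])
    show "(\<lambda>w. {v, w}) ` N \<subseteq> R" using N by blast
    show "prod f e \<le> prod g e" if "e \<in> R" for e
      using assms(2)[OF that] by (intro prod_mono) auto
    show "prod f e < prod g e" if "e \<in> (\<lambda>w. {v, w}) ` N" for e
    proof -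
      from that obtain w where w: "e = {v, w}" "w \<in> N" by blast
      with N have "f w \<le> g w" "0 < f w" "w \<noteq> v" using assms(2) by blast+
      with w assms(3) show ?thesis by (simp add: mult_less_le_imp_less)
    qed
  qed
  finally show ?thesis .
qed

lemma sum_prod_deg_rotate_edge_gain:
  assumes tree: "is_tree n E" and "u \<noteq> v"
    and nbrs_u: "{y. {y, u} \<in> E} = {a, c}" and deg_v: "deg E v = 3"
    and reach: "(u, v) \<in> (adj_rel (E - {{u, c}}))\<^sup>*"
  defines "E' \<equiv> insert {v, c} (E - {{u, c}})" and "R \<equiv> E - {{u, c}, {u, a}}"
  shows "(\<Sum>e\<in>R. prod (deg E) e) + deg E a + 3 \<le> (\<Sum>e\<in>R. prod (deg E') e) + deg E' a"
proof -
  define D where "D = deg E"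
  define N where "N = {y. {y, v} \<in> E} - {u}"
  have fin: "finite E" by (rule is_tree_finite[OF tree])
  have "{a, u} \<in> E" "{c, u} \<in> E" using nbrs_u by blast+
  then have ua: "{u, a} \<in> E" and uc: "{u, c} \<in> E" by (simp_all add: insert_commute)
  have fresh: "{v, c} \<notin> E" "distinct [u, v, c]"
    using is_tree_rotate_edge_fresh[OF tree uc \<open>u \<noteq> v\<close> reach] is_tree_edgeD[OF tree uc]
      \<open>u \<noteq> v\<close> by auto
  have "a \<noteq> u" using is_tree_edgeD[OF tree ua] by simp
  have D': "deg E' = D(u := D u - 1, v := 4)"
    using deg_rotate_edge_in_tree[OF tree uc \<open>u \<noteq> v\<close> reach] deg_v unfolding E'_def D_def by simp
  have u_notin_R: "u \<notin> e" if e: "e \<in> R" for e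
  proof
    assume "u \<in> e"
    then obtain w where w: "{w, u} \<in> E" "e = {u, w}"
      using is_tree_edge_incident[OF tree] e unfolding R_def by blast
    then have "w = a \<or> w = c" using nbrs_u by blast
    with e w(2) show False unfolding R_def by blast
  qed
  have "(\<Sum>e\<in>R. prod D e) + card N \<le> (\<Sum>e\<in>R. prod (deg E') e)"
  proof (rule sum_prod_le_sum_prod_raise)
    show "finite R" using fin unfolding R_def by simp
    show "D x \<le> deg E' x" if "e \<in> R" "x \<in> e" for e x
      using u_notin_R that deg_v unfolding D' D_def by auto
    show "{v, w} \<in> R \<and> w \<noteq> v \<and> 0 < D w" if "w \<in> N" for w
      using that fresh(2) is_tree_edgeD[OF tree] deg_pos[OF fin, of v w]
      unfolding N_def R_def D_def by (auto simp: insert_commute doubleton_eq_iff)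
  qed (use deg_v in \<open>simp add: D' D_def\<close>)
  moreover have "D a + 3 \<le> deg E' a + card N"
  proof (cases "a = v")
    case True
    then have "u \<in> {y. {y, v} \<in> E}" using ua by simp
    then show ?thesis
      using True deg_v fresh(2) finite_neighbours[OF fin] unfolding N_def D' D_def deg_def by simp
  next
    case False
    then have "N = {y. {y, v} \<in> E}"
      using fresh(2) nbrs_u unfolding N_def by (auto simp: insert_commute)
    then show ?thesis using False deg_v \<open>a \<noteq> u\<close> unfolding D' D_def deg_def by simp
  qed
  ultimately show ?thesis unfolding D_def by linarith
qed

lemma M2_rotate_edge_less:
  assumes chem: "chemical_tree n E" and "v < n" "u \<noteq> v"
    and nbrs_u: "{y. {y, u} \<in> E} = {a, c}" "a \<noteq> c" and deg_v: "deg E v = 3"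
    and reach: "(u, v) \<in> (adj_rel (E - {{u, c}}))\<^sup>*"
  shows "M2 n E < M2 n (insert {v, c} (E - {{u, c}}))"
proof -
  define E' where "E' = insert {v, c} (E - {{u, c}})"
  define D where "D = deg E"
  define R where "R = E - {{u, c}, {u, a}}"
  have tree: "is_tree n E" and deg_le_4: "\<forall>x<n. D x \<le> 4"
    using chem unfolding chemical_tree_def D_def by auto
  have fin: "finite E" by (rule is_tree_finite[OF tree])
  have "{a, u} \<in> E" "{c, u} \<in> E" using nbrs_u(1) by blast+
  then have ua: "{u, a} \<in> E" and uc: "{u, c} \<in> E" by (simp_all add: insert_commute)
  have fresh: "{v, c} \<notin> E" "distinct [u, v, c]" "{u, c} \<noteq> {u, a}" "{v, c} \<noteq> {u, a}"
    using is_tree_rotate_edge_fresh[OF tree uc \<open>u \<noteq> v\<close> reach] is_tree_edgeD[OF tree uc]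
      \<open>u \<noteq> v\<close> nbrs_u(2) by (auto simp: doubleton_eq_iff)
  have "D u = 2" using nbrs_u unfolding D_def deg_def by simp
  then have D': "deg E' = D(u := 1, v := 4)"
    using deg_rotate_edge_in_tree[OF tree uc \<open>u \<noteq> v\<close> reach] deg_v unfolding E'_def D_def by simp
  have "a \<noteq> u" "a < n" using is_tree_edgeD[OF tree] ua by auto
  have R: "finite R" "{u, c} \<notin> R" "{u, a} \<notin> R" "{v, c} \<notin> R"
    using fin fresh(1) unfolding R_def by auto
  have "E = insert {u, c} (insert {u, a} R)" using ua uc unfolding R_def by auto
  then have "(\<Sum>e\<in>E. prod D e) = 2 * D c + 2 * D a + (\<Sum>e\<in>R. prod D e)"
    using R fresh(2,3) \<open>a \<noteq> u\<close> \<open>D u = 2\<close> by simp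
  moreover have "E' = insert {v, c} (insert {u, a} R)"
    using ua fresh(3) unfolding E'_def R_def by blast
  then have "(\<Sum>e\<in>E'. prod (deg E') e) = 4 * D c + deg E' a + (\<Sum>e\<in>R. prod (deg E') e)"
    using R fresh(2,4) \<open>a \<noteq> u\<close> unfolding D' by simp
  moreover have "(\<Sum>e\<in>R. prod D e) + D a + 3 \<le> (\<Sum>e\<in>R. prod (deg E') e) + deg E' a"
    using sum_prod_deg_rotate_edge_gain[OF tree \<open>u \<noteq> v\<close> nbrs_u(1) deg_v reach]
    unfolding E'_def R_def D_def .
  moreover have "D a \<le> 4" "0 < D c"
    using deg_le_4 \<open>a < n\<close> deg_pos[OF fin] uc unfolding D_def by auto
  ultimately have "(\<Sum>e\<in>E. prod D e) < (\<Sum>e\<in>E'. prod (deg E') e)" by linarith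
  moreover have "is_tree n E'"
    unfolding E'_def by (rule is_tree_rotate_edge[OF tree uc \<open>u \<noteq> v\<close> \<open>v < n\<close> reach])
  ultimately show ?thesis
    using M2_eq_sum_edges[OF is_tree_edges[OF tree]] M2_eq_sum_edges[OF is_tree_edges]
    unfolding E'_def D_def by simp
qed

theorem lemma7:
  fixes n b :: nat and T :: "nat set set"
  assumes "1 \<le> b" and "real b < real n / 2 - 1"
    and "T \<in> CT_star n b"
    and "(\<forall>T' \<in> CT_star n b. M1 n T' \<le> M1 n T) \<or> (\<forall>T' \<in> CT_star n b. M2 n T' \<le> M2 n T)"
  shows "\<not> ((\<exists>u<n. deg T u = 2) \<and> (\<exists>v<n. deg T v = 3))"
proof
  assume "(\<exists>u<n. deg T u = 2) \<and> (\<exists>v<n. deg T v = 3)"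
  then obtain u v where u: "u < n" "deg T u = 2" and v: "v < n" "deg T v = 3" by blast
  then have "u \<noteq> v" by auto
  have chem: "chemical_tree n T" and b: "num_branching n T = b"
    using assms(3) unfolding CT_star_def by auto
  then have tree: "is_tree n T" unfolding chemical_tree_def by simp
  obtain a c where nbrs_u: "{y. {y, u} \<in> T} = {a, c}" "a \<noteq> c" and uc: "{u, c} \<in> T"
    and reach: "(u, v) \<in> (adj_rel (T - {{u, c}}))\<^sup>*"
    using is_tree_deg_2_removable_edge[OF tree u(1) v(1) u(2)] by blast
  define T' where "T' = insert {v, c} (T - {{u, c}})"
  have "T' \<in> CT_star n b"
    using rotate_edge_in_CT_star[OF chem uc \<open>u \<noteq> v\<close> v(1) u(2) v(2) reach] b
    unfolding T'_def by simp
  moreover have "M1 n T < M1 n T'"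
    using M1_rotate_edge_less[OF tree uc \<open>u \<noteq> v\<close> u(1) v(1) u(2) v(2) reach] unfolding T'_def .
  moreover have "M2 n T < M2 n T'"
    using M2_rotate_edge_less[OF chem v(1) \<open>u \<noteq> v\<close> nbrs_u v(2) reach] unfolding T'_def .
  ultimately show False using assms(4) by (meson not_le)
qed

end
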